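(* For all integers $k\ge 1$ and $t\ge 1$, $$B_0(k,2t)+B_1(k+1,2t+1)=B_0(k,2t-2k)+p_{de}(2t-k)+p_{do}(2t-2k).$$
   Context: For a partition $\pi$, $s(\pi)$ is its smallest part. For $j\ge1$, $\mathrm{Spt}j_{do}(n)$ is the set of partitions $\pi$ of $n$ in which $s(\pi)$ occurs exactly $j$ times and the remaining parts (those larger than $s(\pi)$) are pairwise distinct and each has parity different from that of $s(\pi)$. $B_0(j,n)$ (resp. $B_1(j,n)$) is the number of $\pi\in\mathrm{Spt}j_{do}(n)$ whose number of parts greater than $s(\pi)$ is even (resp. odd); $B_0(j,n)=B_1(j,n)=0$ for $n\le 0$. $p_{de}(n)$ (resp. $p_{do}(n)$) is the number of partitions of $n$ into distinct even (resp. distinct odd) parts, with value $1$ at $n=0$ and $0$ for $n<0$. *)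

theory Defs
  imports Main "HOL-Library.Multiset"
begin

definition partitions :: "nat \<Rightarrow> nat multiset set" where
  "partitions n = {\<pi>. (\<forall>p\<in>#\<pi>. 0 < p) \<and> sum_mset \<pi> = n}"

text \<open>Smallest part s(pi) (meaningful for nonempty pi).\<close>
definition spart :: "nat multiset \<Rightarrow> nat" where
  "spart \<pi> = Min (set_mset \<pi>)"

definition spt_do :: "nat \<Rightarrow> nat \<Rightarrow> nat multiset set" where
  "spt_do j n = {\<pi> \<in> partitions n. \<pi> \<noteq> {#} \<and> count \<pi> (spart \<pi>) = j \<and>
     (\<forall>p\<in>#\<pi>. spart \<pi> < p \<longrightarrow> count \<pi> p = 1 \<and> (odd p \<longleftrightarrow> \<not> odd (spart \<pi>)))}"

definition large_parts :: "nat multiset \<Rightarrow> nat" where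
  "large_parts \<pi> = size (filter_mset (\<lambda>p. spart \<pi> < p) \<pi>)"

definition B0 :: "nat \<Rightarrow> int \<Rightarrow> nat" where
  "B0 j n = (if n \<le> 0 then 0 else card {\<pi> \<in> spt_do j (nat n). even (large_parts \<pi>)})"

definition B1 :: "nat \<Rightarrow> int \<Rightarrow> nat" where
  "B1 j n = (if n \<le> 0 then 0 else card {\<pi> \<in> spt_do j (nat n). odd (large_parts \<pi>)})"

text \<open>Partitions into distinct even / distinct odd parts (1 at n = 0, 0 for n < 0).\<close>
definition p_de :: "int \<Rightarrow> nat" where
  "p_de n = (if n < 0 then 0 else
     card {\<pi> \<in> partitions (nat n). \<forall>p\<in>#\<pi>. even p \<and> count \<pi> p = 1})"

definition p_do :: "int \<Rightarrow> nat" where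
  "p_do n = (if n < 0 then 0 else
     card {\<pi> \<in> partitions (nat n). \<forall>p\<in>#\<pi>. odd p \<and> count \<pi> p = 1})"

end

theory Submission
  imports Defs
begin

text \<open>A partition in Spt j_do(n) is determined by its smallest part s and the set D of its
  larger parts, subject to j s + \<Sum>D = n; the sign in B0/B1 is the parity of |D|. Sort both sides
  by s. For s = 1 the larger parts are distinct even numbers, and the partitions counted by
  B0(k, 2t) and B1(k + 1, 2t + 1) together are the partitions of 2t - k into distinct even parts,
  split by the parity of their length. For s = 2 the larger parts are distinct odd numbers above 1,
  and adjoining the part 1 to those counted by B1 yields every partition of 2t - 2k into distinct
  odd parts (their length is even since 2t - 2k is). For s \<ge> 3, raising s by 2 maps a
  partition counted by B0(k, 2t - 2k) to one counted by B0(k, 2t), unless s + 1 is among its larger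
  parts; removing that part instead gives one counted by B1(k + 1, 2t + 1).\<close>

lemma card_filter_split:
  assumes "finite S"
  shows "card S = card {x \<in> S. Q x} + card {x \<in> S. \<not> Q x}"
  using card_Int_Diff[OF assms, of "Collect Q"] by (simp add: Collect_conj_eq set_diff_eq Int_commute)

lemma card_split_fst_1_2_ge_3:
  fixes S :: "(nat \<times> 'a) set"
  assumes "finite S" and "\<forall>x\<in>S. 0 < fst x"
  shows "card S = card {x \<in> S. fst x = 1} + card {x \<in> S. fst x = 2} + card {x \<in> S. 3 \<le> fst x}"
proof -
  have "S = ({x \<in> S. fst x = 1} \<union> {x \<in> S. fst x = 2}) \<union> {x \<in> S. 3 \<le> fst x}"
    using assms(2) by force
  also have "card \<dots> = card ({x \<in> S. fst x = 1} \<union> {x \<in> S. fst x = 2}) + card {x \<in> S. 3 \<le> fst x}"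
    using assms(1) by (intro card_Un_disjoint) auto
  also have "card ({x \<in> S. fst x = 1} \<union> {x \<in> S. fst x = 2}) =
      card {x \<in> S. fst x = 1} + card {x \<in> S. fst x = 2}"
    using assms(1) by (intro card_Un_disjoint) auto
  finally show ?thesis .
qed

lemma card_members_containing:
  "card {F \<in> \<F>. a \<in> F} = card {D. a \<notin> D \<and> insert a D \<in> \<F>}"
proof -
  have "{F \<in> \<F>. a \<in> F} = insert a ` {D. a \<notin> D \<and> insert a D \<in> \<F>}"
  proof (intro equalityI subsetI)
    fix F assume "F \<in> {F \<in> \<F>. a \<in> F}"
    then have "F - {a} \<in> {D. a \<notin> D \<and> insert a D \<in> \<F>}" and "F = insert a (F - {a})"
      by (auto simp: insert_absorb)
    then show "F \<in> insert a ` {D. a \<notin> D \<and> insert a D \<in> \<F>}" by (rule rev_image_eqI)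
  qed auto
  moreover have "inj_on (insert a) {D. a \<notin> D \<and> insert a D \<in> \<F>}"
    by (rule inj_onI) (metis Diff_insert_absorb mem_Collect_eq)
  ultimately show ?thesis by (simp add: card_image)
qed

lemma finite_sets_with_sum: "finite {D :: nat set. finite D \<and> R D \<and> c + \<Sum>D = n}"
proof (rule finite_subset)
  show "{D :: nat set. finite D \<and> R D \<and> c + \<Sum>D = n} \<subseteq> Pow {..n}"
  proof
    fix D assume D: "D \<in> {D :: nat set. finite D \<and> R D \<and> c + \<Sum>D = n}"
    then have "\<forall>d\<in>D. d \<le> \<Sum>D" by (auto intro: member_le_sum)
    with D show "D \<in> Pow {..n}" by auto
  qed
qed simp

lemma even_sum_odd_iff_even_card:
  fixes F :: "nat set"
  shows "finite F \<Longrightarrow> \<forall>d\<in>F. odd d \<Longrightarrow> even (\<Sum>F) \<longleftrightarrow> even (card F)"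
  by (induct F rule: finite_induct) auto

lemma sum_mset_mset_set: "sum_mset (mset_set D) = \<Sum>D"
  by (induction D rule: infinite_finite_induct) auto

lemma mset_set_set_mset_if_distinct:
  "\<forall>p\<in>#\<pi>. count \<pi> p = 1 \<Longrightarrow> mset_set (set_mset \<pi>) = \<pi>"
  by (rule multiset_eqI) (metis count_eq_zero_iff count_mset_set(1,3) finite_set_mset)

lemma filter_mset_replicate_mset_add_mset_set:
  fixes s :: nat
  assumes "finite D" "\<forall>d\<in>D. s < d"
  shows "filter_mset (\<lambda>p. s < p) (replicate_mset j s + mset_set D) = mset_set D"
proof -
  have "filter_mset (\<lambda>p. s < p) (replicate_mset j s) = {#}" by (induction j) auto
  moreover have "{d \<in> D. s < d} = D" using assms(2) by auto
  ultimately show ?thesis using assms(1) by simp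
qed

lemma spart_replicate_mset_add_mset_set:
  assumes "0 < j" "finite D" "\<forall>d\<in>D. s < d"
  shows "spart (replicate_mset j s + mset_set D) = s"
proof -
  have "set_mset (replicate_mset j s + mset_set D) = insert s D" using assms by auto
  then show ?thesis using assms by (simp add: spart_def Min_insert2 less_imp_le)
qed

lemma mset_eq_replicate_spart_add_large_parts:
  fixes \<pi> :: "nat multiset"
  assumes "\<forall>p\<in>#\<pi>. spart \<pi> < p \<longrightarrow> count \<pi> p = 1"
  shows "\<pi> = replicate_mset (count \<pi> (spart \<pi>)) (spart \<pi>) +
           mset_set (set_mset (filter_mset (\<lambda>p. spart \<pi> < p) \<pi>))"
proof (rule multiset_eqI)
  fix x
  have "spart \<pi> \<le> x" if "x \<in># \<pi>" using that by (simp add: spart_def)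
  then show "count \<pi> x = count (replicate_mset (count \<pi> (spart \<pi>)) (spart \<pi>) +
      mset_set (set_mset (filter_mset (\<lambda>p. spart \<pi> < p) \<pi>))) x"
    using assms by (cases "x \<in># \<pi>") (auto simp: count_mset_set' not_in_iff)
qed

lemma card_distinct_parts:
  "card {\<pi> \<in> partitions n. \<forall>p\<in>#\<pi>. Q p \<and> count \<pi> p = 1} =
   card {D. finite D \<and> (\<forall>d\<in>D. Q d \<and> 0 < d) \<and> \<Sum>D = n}"
proof (rule bij_betw_same_card[OF bij_betw_byWitness[where f = set_mset and f' = mset_set]])
  show "\<forall>\<pi>\<in>{\<pi> \<in> partitions n. \<forall>p\<in>#\<pi>. Q p \<and> count \<pi> p = 1}. mset_set (set_mset \<pi>) = \<pi>"
    by (simp add: mset_set_set_mset_if_distinct)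
  show "\<forall>D\<in>{D. finite D \<and> (\<forall>d\<in>D. Q d \<and> 0 < d) \<and> \<Sum>D = n}. set_mset (mset_set D) = D"
    by simp
  show "set_mset ` {\<pi> \<in> partitions n. \<forall>p\<in>#\<pi>. Q p \<and> count \<pi> p = 1}
          \<subseteq> {D. finite D \<and> (\<forall>d\<in>D. Q d \<and> 0 < d) \<and> \<Sum>D = n}"
  proof clarify
    fix \<pi> assume "\<pi> \<in> partitions n" and distinct: "\<forall>p\<in>#\<pi>. Q p \<and> count \<pi> p = 1"
    then have "\<Sum>(set_mset \<pi>) = n"
      by (metis (mono_tags) partitions_def mem_Collect_eq mset_set_set_mset_if_distinct sum_mset_mset_set)
    then show "finite (set_mset \<pi>) \<and> (\<forall>d\<in>set_mset \<pi>. Q d \<and> 0 < d) \<and> \<Sum>(set_mset \<pi>) = n"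
      using \<open>\<pi> \<in> partitions n\<close> distinct by (simp add: partitions_def)
  qed
  show "mset_set ` {D. finite D \<and> (\<forall>d\<in>D. Q d \<and> 0 < d) \<and> \<Sum>D = n}
          \<subseteq> {\<pi> \<in> partitions n. \<forall>p\<in>#\<pi>. Q p \<and> count \<pi> p = 1}"
    by (auto simp: partitions_def sum_mset_mset_set)
qed

lemma card_distinct_parts_offset:
  assumes "c \<le> n"
  shows "card {\<pi> \<in> partitions (n - c). \<forall>p\<in>#\<pi>. Q p \<and> count \<pi> p = 1} =
         card {D. finite D \<and> (\<forall>d\<in>D. Q d \<and> 0 < d) \<and> c + \<Sum>D = n}"
proof -
  have "(\<Sum>D = n - c) \<longleftrightarrow> c + \<Sum>D = n" for D :: "nat set" using assms by linarith
  then show ?thesis unfolding card_distinct_parts by simp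
qed

lemma p_de_eq_card_sets:
  "p_de (int n - int c) = card {D. finite D \<and> (\<forall>d\<in>D. even d \<and> 0 < d) \<and> c + \<Sum>D = n}"
proof (cases "c \<le> n")
  case True
  then have "\<not> int n - int c < 0" "nat (int n - int c) = n - c" by auto
  then show ?thesis using card_distinct_parts_offset[OF True, of even] by (simp add: p_de_def)
next
  case False
  then have "int n - int c < 0" "{D. finite D \<and> (\<forall>d\<in>D. even d \<and> 0 < d) \<and> c + \<Sum>D = n} = {}"
    by auto
  then show ?thesis by (simp add: p_de_def)
qed

lemma p_do_eq_card_sets:
  "p_do (int n - int c) = card {D. finite D \<and> (\<forall>d\<in>D. odd d) \<and> c + \<Sum>D = n}"
proof (cases "c \<le> n")
  case True
  then have "\<not> int n - int c < 0" "nat (int n - int c) = n - c" by auto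
  moreover have "(odd d \<and> 0 < d) \<longleftrightarrow> odd d" for d :: nat using odd_pos by blast
  ultimately show ?thesis using card_distinct_parts_offset[OF True, of odd] by (simp add: p_do_def)
next
  case False
  then have "int n - int c < 0" "{D. finite D \<and> (\<forall>d\<in>D. odd d) \<and> c + \<Sum>D = n} = {}"
    by auto
  then show ?thesis by (simp add: p_do_def)
qed

text \<open>\<open>(s, D) \<in> spt_code j n P\<close> encodes the partition of n with j copies of the smallest
  part s and the set D of larger parts, whose number satisfies P.\<close>

definition spt_code :: "nat \<Rightarrow> nat \<Rightarrow> (nat \<Rightarrow> bool) \<Rightarrow> (nat \<times> nat set) set" where
  "spt_code j n P = {(s, D). 0 < s \<and> finite D \<and> (\<forall>d\<in>D. s < d \<and> odd (d + s)) \<and>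
     j * s + \<Sum>D = n \<and> P (card D)}"

lemma mem_spt_code [simp]:
  "(s, D) \<in> spt_code j n P \<longleftrightarrow>
     0 < s \<and> finite D \<and> (\<forall>d\<in>D. s < d \<and> odd (d + s)) \<and> j * s + \<Sum>D = n \<and> P (card D)"
  by (simp add: spt_code_def)

lemma finite_spt_code:
  assumes "0 < j"
  shows "finite (spt_code j n P)"
proof (rule finite_subset)
  show "spt_code j n P \<subseteq> {..n} \<times> Pow {..n}"
  proof clarify
    fix s D assume "(s, D) \<in> spt_code j n P"
    then have D: "finite D" and n: "j * s + \<Sum>D = n" by auto
    have "s \<le> j * s" using assms by simp
    then have "s \<le> n" using n by linarith
    moreover have "\<forall>d\<in>D. d \<le> \<Sum>D" using D by (auto intro: member_le_sum)
    ultimately show "s \<in> {..n} \<and> D \<in> Pow {..n}" using n by auto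
  qed
qed simp

lemma spt_code_0: "0 < j \<Longrightarrow> spt_code j 0 P = {}"
  by (auto simp: spt_code_def)

lemma card_spt_code_split_fst:
  assumes "0 < j"
  shows "card (spt_code j n P) = card {x \<in> spt_code j n P. fst x = 1} +
           card {x \<in> spt_code j n P. fst x = 2} + card {x \<in> spt_code j n P. 3 \<le> fst x}"
  by (rule card_split_fst_1_2_ge_3[OF finite_spt_code[OF assms]]) (auto simp: spt_code_def)

lemma card_spt_code_fst_eq:
  "0 < s \<Longrightarrow> card {x \<in> spt_code j n P. fst x = s} =
     card {D. finite D \<and> (\<forall>d\<in>D. s < d \<and> odd (d + s)) \<and> j * s + \<Sum>D = n \<and> P (card D)}"
proof -
  assume "0 < s"
  then have "{x \<in> spt_code j n P. fst x = s} =
      Pair s ` {D. finite D \<and> (\<forall>d\<in>D. s < d \<and> odd (d + s)) \<and> j * s + \<Sum>D = n \<and> P (card D)}"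
    by auto
  then show ?thesis by (simp add: card_image inj_on_def)
qed

lemma bij_betw_spt_code_spt_do:
  assumes "0 < j"
  shows "bij_betw (\<lambda>(s, D). replicate_mset j s + mset_set D)
           (spt_code j n P) {\<pi> \<in> spt_do j n. P (large_parts \<pi>)}"
proof (rule bij_betw_byWitness[where f' = "\<lambda>\<pi>. (spart \<pi>, set_mset (filter_mset (\<lambda>p. spart \<pi> < p) \<pi>))"])
  show "\<forall>x\<in>spt_code j n P. (\<lambda>\<pi>. (spart \<pi>, set_mset (filter_mset (\<lambda>p. spart \<pi> < p) \<pi>)))
          ((\<lambda>(s, D). replicate_mset j s + mset_set D) x) = x"
    using assms by (auto simp: spart_replicate_mset_add_mset_set filter_mset_replicate_mset_add_mset_set)
  show "\<forall>\<pi>\<in>{\<pi> \<in> spt_do j n. P (large_parts \<pi>)}. (\<lambda>(s, D). replicate_mset j s + mset_set D)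
          ((\<lambda>\<pi>. (spart \<pi>, set_mset (filter_mset (\<lambda>p. spart \<pi> < p) \<pi>))) \<pi>) = \<pi>"
  proof clarify
    fix \<pi> assume "\<pi> \<in> spt_do j n"
    then have "count \<pi> (spart \<pi>) = j" "\<forall>p\<in>#\<pi>. spart \<pi> < p \<longrightarrow> count \<pi> p = 1"
      by (auto simp: spt_do_def)
    then show "replicate_mset j (spart \<pi>) + mset_set (set_mset (filter_mset (\<lambda>p. spart \<pi> < p) \<pi>)) = \<pi>"
      using mset_eq_replicate_spart_add_large_parts[of \<pi>] by metis
  qed
  show "(\<lambda>(s, D). replicate_mset j s + mset_set D) ` spt_code j n P
          \<subseteq> {\<pi> \<in> spt_do j n. P (large_parts \<pi>)}"
  proof clarify
    fix s D assume sD: "(s, D) \<in> spt_code j n P"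
    define \<pi> where "\<pi> = replicate_mset j s + mset_set D"
    from sD have D: "finite D" "\<forall>d\<in>D. s < d" by auto
    have spart: "spart \<pi> = s" and large: "filter_mset (\<lambda>p. s < p) \<pi> = mset_set D"
      using spart_replicate_mset_add_mset_set[OF assms D] filter_mset_replicate_mset_add_mset_set[OF D]
      by (simp_all add: \<pi>_def)
    have parts: "set_mset \<pi> \<subseteq> insert s D" using D by (auto simp: \<pi>_def)
    then have "\<forall>p\<in>#\<pi>. 0 < p" using sD by fastforce
    moreover have "sum_mset \<pi> = n" using sD by (simp add: \<pi>_def sum_mset_mset_set)
    ultimately have "\<pi> \<in> partitions n" by (simp add: partitions_def)
    moreover have "\<pi> \<noteq> {#}" using assms by (simp add: \<pi>_def)
    moreover have "count \<pi> s = j" using D by (auto simp: \<pi>_def count_mset_set')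
    moreover have "count \<pi> p = 1 \<and> (odd p \<longleftrightarrow> \<not> odd s)" if "p \<in># \<pi>" "s < p" for p
    proof -
      have "p \<in> D" using that parts by auto
      then show ?thesis using sD D that(2) by (auto simp: \<pi>_def count_mset_set')
    qed
    ultimately have "\<pi> \<in> spt_do j n" by (simp add: spt_do_def spart)
    moreover have "large_parts \<pi> = card D"
      by (simp add: large_parts_def spart large)
    ultimately show "\<pi> \<in> spt_do j n \<and> P (large_parts \<pi>)" using sD by simp
  qed
  show "(\<lambda>\<pi>. (spart \<pi>, set_mset (filter_mset (\<lambda>p. spart \<pi> < p) \<pi>))) `
          {\<pi> \<in> spt_do j n. P (large_parts \<pi>)} \<subseteq> spt_code j n P"
  proof clarify
    fix \<pi> assume \<pi>: "\<pi> \<in> spt_do j n" "P (large_parts \<pi>)"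
    define s where "s = spart \<pi>"
    define D where "D = set_mset (filter_mset (\<lambda>p. s < p) \<pi>)"
    have D: "finite D" "\<forall>d\<in>D. s < d" by (auto simp: D_def)
    have decomp: "\<pi> = replicate_mset j s + mset_set D"
      using \<pi>(1) mset_eq_replicate_spart_add_large_parts[of \<pi>] by (auto simp: spt_do_def s_def D_def)
    have "s \<in># \<pi>" using \<pi>(1) by (simp add: spt_do_def s_def spart_def)
    then have "0 < s" using \<pi>(1) by (auto simp: spt_do_def partitions_def)
    moreover have "j * s + \<Sum>D = n"
      using \<pi>(1) decomp by (auto simp: spt_do_def partitions_def sum_mset_mset_set)
    moreover have "large_parts \<pi> = card D"
      unfolding large_parts_def s_def[symmetric]
      by (subst decomp, subst filter_mset_replicate_mset_add_mset_set[OF D]) simp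
    moreover have "\<forall>d\<in>D. odd (d + s)"
      using \<pi>(1) by (auto simp: spt_do_def D_def s_def)
    ultimately have "(s, D) \<in> spt_code j n P" using D \<pi>(2) by simp
    then show "(spart \<pi>, set_mset (filter_mset (\<lambda>p. spart \<pi> < p) \<pi>)) \<in> spt_code j n P"
      by (simp only: D_def s_def)
  qed
qed

lemma card_spt_do_eq_card_spt_code:
  "0 < j \<Longrightarrow> card {\<pi> \<in> spt_do j n. P (large_parts \<pi>)} = card (spt_code j n P)"
  using bij_betw_same_card[OF bij_betw_spt_code_spt_do] by simp

lemma B0_eq_card_spt_code: "0 < j \<Longrightarrow> B0 j n = card (spt_code j (nat n) even)"
  by (simp add: B0_def card_spt_do_eq_card_spt_code spt_code_0)

lemma B1_eq_card_spt_code: "0 < j \<Longrightarrow> B1 j n = card (spt_code j (nat n) odd)"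
  by (simp add: B1_def card_spt_do_eq_card_spt_code[of j _ odd] spt_code_0)

lemma card_spt_codes_smallest_part_1:
  "card {x \<in> spt_code k n even. fst x = 1} + card {x \<in> spt_code (Suc k) (Suc n) odd. fst x = 1} =
   card {D. finite D \<and> (\<forall>d\<in>D. even d \<and> 0 < d) \<and> k + \<Sum>D = n}"
  (is "_ = card ?E")
proof -
  have "(1 < d \<and> odd (d + 1)) \<longleftrightarrow> (even d \<and> 0 < d)" for d :: nat
    by presburger
  then have "{D. finite D \<and> (\<forall>d\<in>D. 1 < d \<and> odd (d + 1)) \<and> k * 1 + \<Sum>D = n \<and> even (card D)}
               = {D \<in> ?E. even (card D)}"
    and "{D. finite D \<and> (\<forall>d\<in>D. 1 < d \<and> odd (d + 1)) \<and> Suc k * 1 + \<Sum>D = Suc n \<and> odd (card D)}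
               = {D \<in> ?E. odd (card D)}"
    by auto
  moreover have "finite ?E" by (rule finite_sets_with_sum)
  ultimately show ?thesis
    by (simp only: card_spt_code_fst_eq[of 1] zero_less_one card_filter_split[symmetric])
qed

lemma card_spt_codes_smallest_part_2:
  assumes "even n"
  shows "card {x \<in> spt_code k n even. fst x = 2} + card {x \<in> spt_code (Suc k) (Suc n) odd. fst x = 2} =
         card {F. finite F \<and> (\<forall>d\<in>F. odd d) \<and> 2 * k + \<Sum>F = n}"
  (is "_ = card ?O")
proof -
  have parts_gt_2: "(\<forall>d\<in>D. 2 < d \<and> odd (d + 2)) \<longleftrightarrow> (\<forall>d\<in>D. odd d) \<and> 1 \<notin> D" for D :: "nat set"
  proof -
    have "(2 < d \<and> odd (d + 2)) \<longleftrightarrow> (odd d \<and> d \<noteq> 1)" for d :: nat by presburger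
    then show ?thesis by blast
  qed
  have card_even: "even (card F)" if "F \<in> ?O" for F
  proof -
    from that have F: "finite F" "\<forall>d\<in>F. odd d" and "2 * k + \<Sum>F = n" by simp_all
    with assms have "even (\<Sum>F)" by (metis dvd_add_right_iff dvd_triv_left)
    with F show ?thesis by (simp add: even_sum_odd_iff_even_card)
  qed
  have two: "0 < (2::nat)" by simp
  have "{D. finite D \<and> (\<forall>d\<in>D. 2 < d \<and> odd (d + 2)) \<and> k * 2 + \<Sum>D = n \<and> even (card D)}
          = {F \<in> ?O. 1 \<notin> F}"
    unfolding parts_gt_2 mult.commute[of k 2] using card_even by blast
  then have "card {x \<in> spt_code k n even. fst x = 2} = card {F \<in> ?O. 1 \<notin> F}"
    by (simp only: card_spt_code_fst_eq[OF two])
  moreover have "{D. finite D \<and> (\<forall>d\<in>D. 2 < d \<and> odd (d + 2)) \<and> Suc k * 2 + \<Sum>D = Suc n \<and> odd (card D)}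
          = {D. 1 \<notin> D \<and> insert 1 D \<in> ?O}"
  proof (intro Collect_cong iffI)
    fix D :: "nat set"
    assume D: "finite D \<and> (\<forall>d\<in>D. 2 < d \<and> odd (d + 2)) \<and> Suc k * 2 + \<Sum>D = Suc n \<and> odd (card D)"
    then have "1 \<notin> D" "\<forall>d\<in>D. odd d" using parts_gt_2[of D] by simp_all
    with D show "1 \<notin> D \<and> insert 1 D \<in> ?O" by simp
  next
    fix D :: "nat set" assume D: "1 \<notin> D \<and> insert 1 D \<in> ?O"
    then have "1 \<notin> D" by (rule conjunct1)
    from D have O: "insert 1 D \<in> ?O" by (rule conjunct2)
    from O have "finite D" by simp
    with \<open>1 \<notin> D\<close> O have "\<forall>d\<in>D. odd d" "2 * k + (1 + \<Sum>D) = n" by simp_all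
    moreover have "even (card (insert 1 D))" using O by (rule card_even)
    ultimately show "finite D \<and> (\<forall>d\<in>D. 2 < d \<and> odd (d + 2)) \<and> Suc k * 2 + \<Sum>D = Suc n \<and> odd (card D)"
      using \<open>1 \<notin> D\<close> \<open>finite D\<close> parts_gt_2[of D] by simp
  qed
  then have "card {x \<in> spt_code (Suc k) (Suc n) odd. fst x = 2} = card {F \<in> ?O. 1 \<in> F}"
    by (simp only: card_spt_code_fst_eq[OF two] card_members_containing)
  moreover have "card ?O = card {F \<in> ?O. 1 \<in> F} + card {F \<in> ?O. 1 \<notin> F}"
    by (rule card_filter_split) (rule finite_sets_with_sum)
  ultimately show ?thesis by simp
qed

text \<open>Parts only need to exceed s - 2; by parity the one new part allowed is s - 1.\<close>

definition spt_code_relaxed :: "nat \<Rightarrow> nat \<Rightarrow> (nat \<Rightarrow> bool) \<Rightarrow> (nat \<times> nat set) set" where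
  "spt_code_relaxed j n P = {(s, F). 2 < s \<and> finite F \<and> (\<forall>d\<in>F. s - 2 < d \<and> odd (d + s)) \<and>
     j * s + \<Sum>F = n \<and> P (card F)}"

lemma mem_spt_code_relaxed [simp]:
  "(s, F) \<in> spt_code_relaxed j n P \<longleftrightarrow>
     2 < s \<and> finite F \<and> (\<forall>d\<in>F. s - 2 < d \<and> odd (d + s)) \<and> j * s + \<Sum>F = n \<and> P (card F)"
  by (simp add: spt_code_relaxed_def)

lemma shift_spt_code_eq_spt_code_relaxed:
  assumes "0 < j"
  shows "(\<lambda>(s, F). (s + 2, F)) ` spt_code j (n - 2 * j) P = spt_code_relaxed j n P"
proof (intro equalityI subsetI)
  fix x assume "x \<in> (\<lambda>(s, F). (s + 2, F)) ` spt_code j (n - 2 * j) P"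
  then obtain s F where x: "x = (s + 2, F)" and sF: "(s, F) \<in> spt_code j (n - 2 * j) P" by auto
  then have "0 < j * s" "j * s + \<Sum>F = n - 2 * j" using assms by simp_all
  moreover have "j * (s + 2) = j * s + 2 * j" by (simp add: algebra_simps)
  ultimately have "j * (s + 2) + \<Sum>F = n" by linarith
  then show "x \<in> spt_code_relaxed j n P" using sF by (simp add: x)
next
  fix x assume "x \<in> spt_code_relaxed j n P"
  then obtain s F where x: "x = (s, F)" and sF: "(s, F) \<in> spt_code_relaxed j n P" by (cases x) auto
  then have "2 < s" and "j * s + \<Sum>F = n" by simp_all
  moreover have "j * s = j * (s - 2) + 2 * j" using \<open>2 < s\<close> by (simp add: algebra_simps diff_mult_distrib2)
  ultimately have "j * (s - 2) + \<Sum>F = n - 2 * j" by linarith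
  moreover have "\<forall>d\<in>F. s - 2 < d \<and> odd (d + (s - 2))" using sF \<open>2 < s\<close> by auto
  ultimately have "(s - 2, F) \<in> spt_code j (n - 2 * j) P" using sF by simp
  moreover have "x = (\<lambda>(s, F). (s + 2, F)) (s - 2, F)" using x \<open>2 < s\<close> by simp
  ultimately show "x \<in> (\<lambda>(s, F). (s + 2, F)) ` spt_code j (n - 2 * j) P" by (rule rev_image_eqI)
qed

lemma spt_code_relaxed_without_predecessor:
  "{x \<in> spt_code_relaxed j n P. fst x - 1 \<notin> snd x} = {x \<in> spt_code j n P. 3 \<le> fst x}"
proof (rule set_eqI)
  fix x :: "nat \<times> nat set"
  obtain s F where x: "x = (s, F)" by fastforce
  have parts: "((\<forall>d\<in>F. s - 2 < d \<and> odd (d + s)) \<and> s - 1 \<notin> F) \<longleftrightarrow> (\<forall>d\<in>F. s < d \<and> odd (d + s))"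
    if "2 < s"
  proof -
    have "(s - 2 < d \<and> odd (d + s) \<and> d \<noteq> s - 1) \<longleftrightarrow> (s < d \<and> odd (d + s))" for d
      using that by presburger
    then show ?thesis by blast
  qed
  show "x \<in> {x \<in> spt_code_relaxed j n P. fst x - 1 \<notin> snd x} \<longleftrightarrow> x \<in> {x \<in> spt_code j n P. 3 \<le> fst x}"
  proof (cases "2 < s")
    case True
    then show ?thesis using parts[OF True] by (auto simp: x)
  qed (auto simp: x)
qed

lemma spt_code_relaxed_with_predecessor:
  "{x \<in> spt_code_relaxed j n P. fst x - 1 \<in> snd x} =
   (\<lambda>(s, D). (s, insert (s - 1) D)) ` {x \<in> spt_code (Suc j) (Suc n) (\<lambda>c. P (Suc c)). 3 \<le> fst x}"
proof (intro equalityI subsetI)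
  fix x assume "x \<in> {x \<in> spt_code_relaxed j n P. fst x - 1 \<in> snd x}"
  then obtain s F where x: "x = (s, F)" and sF: "(s, F) \<in> spt_code_relaxed j n P" and "s - 1 \<in> F"
    by (cases x) auto
  define D where "D = F - {s - 1}"
  from sF have "2 < s" and fin: "finite F" and parts: "\<forall>d\<in>F. s - 2 < d \<and> odd (d + s)"
    and sum: "j * s + \<Sum>F = n" and "P (card F)" by simp_all
  have F: "F = insert (s - 1) D" using \<open>s - 1 \<in> F\<close> by (auto simp: D_def)
  have "s - 1 \<notin> D" "finite D" using fin by (simp_all add: D_def)
  then have "\<Sum>F = (s - 1) + \<Sum>D" "card F = Suc (card D)" by (simp_all add: F)
  moreover have "\<forall>d\<in>D. s < d \<and> odd (d + s)"
  proof
    fix d assume "d \<in> D"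
    then have "d \<in> F" "d \<noteq> s - 1" by (simp_all add: D_def)
    then have "s - 2 < d" "odd (d + s)" using parts by simp_all
    moreover have "d \<noteq> s" using \<open>odd (d + s)\<close> by auto
    ultimately show "s < d \<and> odd (d + s)" using \<open>d \<noteq> s - 1\<close> by linarith
  qed
  moreover have "Suc j * s + \<Sum>D = Suc n"
    using sum \<open>\<Sum>F = (s - 1) + \<Sum>D\<close> \<open>2 < s\<close> by simp
  ultimately have "(s, D) \<in> {x \<in> spt_code (Suc j) (Suc n) (\<lambda>c. P (Suc c)). 3 \<le> fst x}"
    using \<open>2 < s\<close> \<open>finite D\<close> \<open>P (card F)\<close> by simp
  moreover have "x = (\<lambda>(s, D). (s, insert (s - 1) D)) (s, D)" using x F by simp
  ultimately show "x \<in> (\<lambda>(s, D). (s, insert (s - 1) D)) ` {x \<in> spt_code (Suc j) (Suc n) (\<lambda>c. P (Suc c)). 3 \<le> fst x}"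
    by (rule rev_image_eqI)
next
  fix x assume "x \<in> (\<lambda>(s, D). (s, insert (s - 1) D)) ` {x \<in> spt_code (Suc j) (Suc n) (\<lambda>c. P (Suc c)). 3 \<le> fst x}"
  then obtain s D where x: "x = (s, insert (s - 1) D)" and "3 \<le> s"
    and sD: "(s, D) \<in> spt_code (Suc j) (Suc n) (\<lambda>c. P (Suc c))" by auto
  then have fin: "finite D" and parts: "\<forall>d\<in>D. s < d \<and> odd (d + s)"
    and sum: "Suc j * s + \<Sum>D = Suc n" and "P (Suc (card D))" by simp_all
  have "s - 1 \<notin> D"
  proof
    assume "s - 1 \<in> D"
    with parts have "s < s - 1" by blast
    then show False by simp
  qed
  then have "\<Sum>(insert (s - 1) D) = (s - 1) + \<Sum>D" "card (insert (s - 1) D) = Suc (card D)"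
    using fin by simp_all
  moreover have "j * s + ((s - 1) + \<Sum>D) = n" using sum \<open>3 \<le> s\<close> by simp
  moreover have "\<forall>d\<in>insert (s - 1) D. s - 2 < d \<and> odd (d + s)"
  proof
    fix d assume "d \<in> insert (s - 1) D"
    then consider "d = s - 1" | "d \<in> D" by blast
    then show "s - 2 < d \<and> odd (d + s)"
    proof cases
      case 1
      have "s - 1 + s = Suc (2 * (s - 1))" using \<open>3 \<le> s\<close> by simp
      then show ?thesis using 1 \<open>3 \<le> s\<close> by simp
    next
      case 2
      with parts have "s < d" "odd (d + s)" by simp_all
      then show ?thesis by simp
    qed
  qed
  ultimately show "x \<in> {x \<in> spt_code_relaxed j n P. fst x - 1 \<in> snd x}"
    using fin \<open>3 \<le> s\<close> \<open>P (Suc (card D))\<close> by (simp add: x)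
qed

lemma card_spt_codes_smallest_part_ge_3:
  assumes "0 < k"
  shows "card (spt_code k (n - 2 * k) even) =
         card {x \<in> spt_code k n even. 3 \<le> fst x} + card {x \<in> spt_code (Suc k) (Suc n) odd. 3 \<le> fst x}"
proof -
  let ?R = "spt_code_relaxed k n even"
  let ?A = "{x \<in> spt_code (Suc k) (Suc n) odd. 3 \<le> fst x}"
  let ?ins = "\<lambda>(s, D). (s :: nat, insert (s - 1) D)"
  have shift: "(\<lambda>(s, F). (s + 2, F)) ` spt_code k (n - 2 * k) even = ?R"
    by (rule shift_spt_code_eq_spt_code_relaxed[OF assms])
  have "inj_on (\<lambda>(s, F). (s + 2 :: nat, F :: nat set)) (spt_code k (n - 2 * k) even)"
    by (auto simp: inj_on_def)
  then have "card (spt_code k (n - 2 * k) even) = card ?R" by (simp add: card_image flip: shift)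
  moreover have "card ?R = card {x \<in> ?R. fst x - 1 \<in> snd x} + card {x \<in> ?R. fst x - 1 \<notin> snd x}"
    by (rule card_filter_split) (simp add: finite_spt_code[OF assms] flip: shift)
  moreover have "{x \<in> ?R. fst x - 1 \<in> snd x} = ?ins ` ?A"
    using spt_code_relaxed_with_predecessor[of k n even] by simp
  moreover have "inj_on ?ins ?A"
  proof (rule inj_onI)
    fix x y assume x: "x \<in> ?A" and y: "y \<in> ?A" and eq: "?ins x = ?ins y"
    obtain s D s' D' where xy: "x = (s, D)" "y = (s', D')" by fastforce
    have "s = s' \<and> insert (s - 1) D = insert (s' - 1) D'" using eq xy by auto
    moreover have "s - 1 \<notin> D" "s' - 1 \<notin> D'" using x y by (auto simp: xy)
    ultimately show "x = y" using xy by (metis Diff_insert_absorb)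
  qed
  ultimately show ?thesis using spt_code_relaxed_without_predecessor[of k n even] by (simp add: card_image)
qed

theorem lemma4:
  fixes k t :: nat
  assumes "1 \<le> k" and "1 \<le> t"
  shows "B0 k (2 * int t) + B1 (k + 1) (2 * int t + 1)
         = B0 k (2 * int t - 2 * int k) + p_de (2 * int t - int k) + p_do (2 * int t - 2 * int k)"
proof -
  have k: "0 < k" using assms(1) by simp
  have "B0 k (2 * int t) = card (spt_code k (2 * t) even)"
    and "B1 (k + 1) (2 * int t + 1) = card (spt_code (Suc k) (Suc (2 * t)) odd)"
    and "B0 k (2 * int t - 2 * int k) = card (spt_code k (2 * t - 2 * k) even)"
    using B0_eq_card_spt_code[OF k] B1_eq_card_spt_code[of "Suc k"]
    by (simp_all add: nat_mult_distrib nat_diff_distrib' nat_add_distrib)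
  moreover have "p_de (2 * int t - int k) =
      card {D. finite D \<and> (\<forall>d\<in>D. even d \<and> 0 < d) \<and> k + \<Sum>D = 2 * t}"
    using p_de_eq_card_sets[of "2 * t" k] by simp
  moreover have "p_do (2 * int t - 2 * int k) =
      card {F. finite F \<and> (\<forall>d\<in>F. odd d) \<and> 2 * k + \<Sum>F = 2 * t}"
    using p_do_eq_card_sets[of "2 * t" "2 * k"] by simp
  ultimately show ?thesis
    using card_spt_code_split_fst[OF k, of "2 * t" even]
      card_spt_code_split_fst[of "Suc k" "Suc (2 * t)" odd]
      card_spt_codes_smallest_part_1[of k "2 * t"] card_spt_codes_smallest_part_2[of "2 * t" k]
      card_spt_codes_smallest_part_ge_3[OF k, of "2 * t"]
    by simp
qed

end
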